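(* Let $P,Q\in\mathbb P_d$ and $R=P^{-1}\#Q^{-1}$. Then $\operatorname{F}_R(P,Q)=\operatorname{F}^{\mathrm M}(P,Q)$.
   Context: $\mathbb P_d$ is the set of $d\times d$ complex positive definite matrices; $A\#B:=A^{1/2}(A^{-1/2}BA^{-1/2})^{1/2}A^{1/2}$ is the matrix geometric mean. The generalized fidelity is $\operatorname{F}_R(P,Q):=\operatorname{Tr}\big[\sqrt{R^{1/2}PR^{1/2}}\,R^{-1}\sqrt{R^{1/2}QR^{1/2}}\big]$, and the Matsumoto fidelity is $\operatorname{F}^{\mathrm M}(P,Q):=\operatorname{Tr}[P\#Q]$. *)

theory Defs
  imports Complex_Main "Jordan_Normal_Form.Matrix" "Jordan_Normal_Form.Conjugate"
    "Jordan_Normal_Form.Schur_Decomposition"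
begin

definition mtrace :: "complex mat \<Rightarrow> complex" where
  "mtrace A = (\<Sum>i<dim_row A. A $$ (i, i))"

definition hermitian_mat :: "complex mat \<Rightarrow> bool" where
  "hermitian_mat A \<longleftrightarrow> mat_adjoint A = A"

definition pos_def_mat :: "nat \<Rightarrow> complex mat \<Rightarrow> bool" where
  "pos_def_mat d A \<longleftrightarrow> A \<in> carrier_mat d d \<and> hermitian_mat A \<and>
     (\<forall>v \<in> carrier_vec d. v \<noteq> 0\<^sub>v d \<longrightarrow> 0 < Re (conjugate v \<bullet> (A *\<^sub>v v)))"

definition pos_semidef_mat :: "nat \<Rightarrow> complex mat \<Rightarrow> bool" where
  "pos_semidef_mat d A \<longleftrightarrow> A \<in> carrier_mat d d \<and> hermitian_mat A \<and>
     (\<forall>v \<in> carrier_vec d. 0 \<le> Re (conjugate v \<bullet> (A *\<^sub>v v)))"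

definition mat_sqrt :: "complex mat \<Rightarrow> complex mat" where
  "mat_sqrt A = (THE S. pos_semidef_mat (dim_row A) S \<and> S * S = A)"

definition mat_inv :: "complex mat \<Rightarrow> complex mat" where
  "mat_inv A = (THE B. B \<in> carrier_mat (dim_row A) (dim_row A) \<and>
                       A * B = 1\<^sub>m (dim_row A) \<and> B * A = 1\<^sub>m (dim_row A))"

definition geo_mean :: "complex mat \<Rightarrow> complex mat \<Rightarrow> complex mat" where
  "geo_mean A B = (let Ah = mat_sqrt A; Aih = mat_inv Ah in
      Ah * mat_sqrt (Aih * B * Aih) * Ah)"

definition gen_fidelity :: "complex mat \<Rightarrow> complex mat \<Rightarrow> complex mat \<Rightarrow> complex" where
  "gen_fidelity R P Q = (let Rh = mat_sqrt R in
      mtrace (mat_sqrt (Rh * P * Rh) * mat_inv R * mat_sqrt (Rh * Q * Rh)))"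

definition matsumoto_fidelity :: "complex mat \<Rightarrow> complex mat \<Rightarrow> complex" where
  "matsumoto_fidelity P Q = mtrace (geo_mean P Q)"

end

theory Submission
  imports Defs
begin

text \<open>Put \<open>R = P\<^sup>-\<^sup>1 # Q\<^sup>-\<^sup>1\<close>. The geometric mean \<open>A # B\<close> is the unique positive definite
  solution \<open>X\<close> of the Riccati equation \<open>X A\<^sup>-\<^sup>1 X = B\<close>, so \<open>R P R = Q\<^sup>-\<^sup>1\<close>.
  Inverting, \<open>R\<^sup>-\<^sup>1\<close> solves \<open>X P\<^sup>-\<^sup>1 X = Q\<close>, hence \<open>P # Q = R\<^sup>-\<^sup>1\<close> and
  \<open>F\<^sup>M(P,Q) = Tr R\<^sup>-\<^sup>1\<close>. On the other side, \<open>X = R\<^sup>1\<^sup>/\<^sup>2 P R\<^sup>1\<^sup>/\<^sup>2\<close> and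
  \<open>Y = R\<^sup>1\<^sup>/\<^sup>2 Q R\<^sup>1\<^sup>/\<^sup>2\<close> satisfy \<open>X Y = 1\<close> by the Riccati equation, so
  \<open>Y\<^sup>1\<^sup>/\<^sup>2 = X\<^sup>-\<^sup>1\<^sup>/\<^sup>2\<close> and
  \<open>F\<^sub>R(P,Q) = Tr (X\<^sup>1\<^sup>/\<^sup>2 R\<^sup>-\<^sup>1 X\<^sup>-\<^sup>1\<^sup>/\<^sup>2) = Tr R\<^sup>-\<^sup>1\<close> as well.
  Square roots and inverses of positive definite matrices come from the spectral theorem for
  Hermitian matrices, obtained from the Schur decomposition.\<close>

lemma mult_carrier_mat_square [simp]:
  "A \<in> carrier_mat n n \<Longrightarrow> B \<in> carrier_mat n n \<Longrightarrow> A * B \<in> carrier_mat n n"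
  by (rule mult_carrier_mat)

lemma mat_adjoint_dim [simp]:
  "dim_row (mat_adjoint A) = dim_col A" "dim_col (mat_adjoint A) = dim_row A"
  unfolding mat_adjoint_def by (auto simp: mat_of_rows_def)

lemma mat_adjoint_index [simp]:
  "i < dim_col A \<Longrightarrow> j < dim_row A \<Longrightarrow> mat_adjoint A $$ (i, j) = cnj (A $$ (j, i))"
  unfolding mat_adjoint_def by (simp add: mat_of_rows_index)

lemma mat_adjoint_carrier [simp]: "A \<in> carrier_mat n m \<Longrightarrow> mat_adjoint A \<in> carrier_mat m n"
  by auto

lemma mat_adjoint_adjoint [simp]: "mat_adjoint (mat_adjoint (A :: complex mat)) = A"
  by (rule eq_matI) auto

lemma mat_adjoint_mult:
  assumes "(A :: complex mat) \<in> carrier_mat n m" "B \<in> carrier_mat m p"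
  shows "mat_adjoint (A * B) = mat_adjoint B * mat_adjoint A"
  using assms by (intro eq_matI) (auto simp: scalar_prod_def cnj_sum mult.commute)

lemma mat_adjoint_minus:
  assumes "(A :: complex mat) \<in> carrier_mat n m" "B \<in> carrier_mat n m"
  shows "mat_adjoint (A - B) = mat_adjoint A - mat_adjoint B"
  using assms by (intro eq_matI) auto

lemma mat_adjoint_one [simp]: "mat_adjoint (1\<^sub>m n :: complex mat) = 1\<^sub>m n"
  by (rule eq_matI) auto

lemma scalar_prod_mat_adjoint:
  assumes "(A :: complex mat) \<in> carrier_mat n m" "v \<in> carrier_vec n" "w \<in> carrier_vec m"
  shows "conjugate v \<bullet> (A *\<^sub>v w) = conjugate (mat_adjoint A *\<^sub>v v) \<bullet> w"
proof -
  have "conjugate v \<bullet> (A *\<^sub>v w) = (\<Sum>i<n. cnj (v $ i) * (\<Sum>j<m. A $$ (i, j) * w $ j))"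
    using assms by (auto simp: scalar_prod_def lessThan_atLeast0)
  also have "\<dots> = (\<Sum>i<n. \<Sum>j<m. cnj (v $ i) * A $$ (i, j) * w $ j)"
    by (simp add: sum_distrib_left mult.assoc)
  also have "\<dots> = (\<Sum>j<m. \<Sum>i<n. cnj (v $ i) * A $$ (i, j) * w $ j)"
    by (rule sum.swap)
  also have "\<dots> = conjugate (mat_adjoint A *\<^sub>v v) \<bullet> w"
    using assms by (auto simp: scalar_prod_def lessThan_atLeast0 sum_distrib_left sum_distrib_right
        mult.commute mult.left_commute intro!: sum.cong)
  finally show ?thesis .
qed

lemma hermitian_scalar_prod:
  assumes "hermitian_mat A" "A \<in> carrier_mat n n" "v \<in> carrier_vec n" "w \<in> carrier_vec n"
  shows "conjugate v \<bullet> (A *\<^sub>v w) = conjugate (A *\<^sub>v v) \<bullet> w"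
  using scalar_prod_mat_adjoint[OF assms(2-4)] assms(1) unfolding hermitian_mat_def by simp

lemma hermitian_mat_index:
  "hermitian_mat A \<Longrightarrow> i < dim_row A \<Longrightarrow> j < dim_row A \<Longrightarrow> A $$ (i, j) = cnj (A $$ (j, i))"
  unfolding hermitian_mat_def by (metis mat_adjoint_dim mat_adjoint_index)

lemma scalar_prod_conjugate_self:
  fixes v :: "complex vec"
  assumes "v \<in> carrier_vec n"
  shows "conjugate v \<bullet> v = of_real (Re (conjugate v \<bullet> v))" "0 \<le> Re (conjugate v \<bullet> v)"
    "conjugate v \<bullet> v = 0 \<longleftrightarrow> v = 0\<^sub>v n"
  using conjugate_square_ge_0_vec[of v] conjugate_square_eq_0_vec[OF assms]
    conjugate_vec_sprod_comm[OF assms assms]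
  by (auto simp: less_eq_complex_def complex_eq_iff)

lemma mult_mat_vec_zero [simp]: "(A :: complex mat) \<in> carrier_mat n m \<Longrightarrow> A *\<^sub>v 0\<^sub>v m = 0\<^sub>v n"
  by (intro eq_vecI) (auto simp: scalar_prod_def)

lemma mtrace_mult_comm:
  assumes "(A :: complex mat) \<in> carrier_mat n m" "B \<in> carrier_mat m n"
  shows "mtrace (A * B) = mtrace (B * A)"
proof -
  have "mtrace (A * B) = (\<Sum>i<n. \<Sum>l<m. A $$ (i, l) * B $$ (l, i))"
    using assms unfolding mtrace_def by (auto simp: scalar_prod_def lessThan_atLeast0)
  also have "\<dots> = (\<Sum>l<m. \<Sum>i<n. B $$ (l, i) * A $$ (i, l))"
    by (subst sum.swap) (simp add: mult.commute)
  also have "\<dots> = mtrace (B * A)"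
    using assms unfolding mtrace_def by (auto simp: scalar_prod_def lessThan_atLeast0)
  finally show ?thesis .
qed

lemma mtrace_hermitian_square:
  assumes "hermitian_mat H" "H \<in> carrier_mat n n"
  shows "mtrace (H * H) = of_real (\<Sum>i<n. \<Sum>j<n. (cmod (H $$ (i, j)))\<^sup>2)"
proof -
  have "H $$ (i, j) * H $$ (j, i) = of_real ((cmod (H $$ (i, j)))\<^sup>2)" if "i < n" "j < n" for i j
    using hermitian_mat_index[OF assms(1), of j i] assms(2) that complex_norm_square
    by (simp add: mult.commute)
  then show ?thesis
    using assms(2) unfolding mtrace_def
    by (auto simp: scalar_prod_def lessThan_atLeast0 intro!: sum.cong)
qed

lemma hermitian_square_trace_zero:
  assumes "hermitian_mat H" "H \<in> carrier_mat n n" "mtrace (H * H) = 0"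
  shows "H = 0\<^sub>m n n"
proof -
  have "(\<Sum>i<n. \<Sum>j<n. (cmod (H $$ (i, j)))\<^sup>2) = 0"
    using assms mtrace_hermitian_square by (metis of_real_eq_0_iff)
  then have "(cmod (H $$ (i, j)))\<^sup>2 = 0" if "i < n" "j < n" for i j
    using that by (simp add: sum_nonneg_eq_0_iff sum_nonneg)
  then show ?thesis using assms(2) by (intro eq_matI) auto
qed

lemma mtrace_square_upper_triangular_zero_diag:
  assumes "upper_triangular T" "T \<in> carrier_mat n n" "\<And>i. i < n \<Longrightarrow> T $$ (i, i) = 0"
  shows "mtrace (T * T) = 0"
proof -
  have zero: "T $$ (i, l) * T $$ (l, i) = 0" if "i < n" "l < n" for i l
  proof (cases i l rule: linorder_cases)
    case less
    then show ?thesis using upper_triangularD[OF assms(1), of i l] assms(2) that by simp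
  next
    case greater
    then show ?thesis using upper_triangularD[OF assms(1), of l i] assms(2) that by simp
  qed (use assms(3) that in simp)
  then show ?thesis
    using assms(2) unfolding mtrace_def by (auto simp: scalar_prod_def zero intro!: sum.neutral)
qed

text \<open>By Schur, \<open>H = P T P\<^sup>-\<^sup>1\<close> with \<open>T\<close> upper triangular with zero diagonal, so
  \<open>Tr (H H) = Tr (T T) = 0\<close>; for Hermitian \<open>H\<close> this trace is \<open>\<Sum>|h\<^sub>i\<^sub>j|\<^sup>2\<close>.\<close>

lemma hermitian_eigenvalues_zero_imp_zero:
  assumes herm: "hermitian_mat H" and H: "H \<in> carrier_mat n n"
    and no_ev: "\<And>\<mu> v. eigenvector H v \<mu> \<Longrightarrow> \<mu> = 0"
  shows "H = 0\<^sub>m n n"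
proof -
  obtain es where es: "char_poly H = (\<Prod>a\<leftarrow>es. [:- a, 1:])"
    using char_poly_factorized[OF H] by blast
  obtain T P Q where "schur_decomposition H es = (T, P, Q)"
    by (cases "schur_decomposition H es") auto
  from schur_decomposition[OF H es this]
  have ut: "upper_triangular T" and diag: "diag_mat T = es" and wit: "similar_mat_wit H T P Q"
    by auto
  note sim = similar_mat_witD2[OF H wit]
  have "e = 0" if "e \<in> set es" for e
  proof -
    have "poly (char_poly H) e = 0" unfolding es using that by (induct es) (auto simp: poly_prod_list)
    then show ?thesis using no_ev eigenvalue_root_char_poly[OF H] unfolding eigenvalue_def by blast
  qed
  then have diag0: "T $$ (i, i) = 0" if "i < n" for i
    using that sim(5) diag unfolding diag_mat_def by auto
  have QP: "Q * (P * X) = X" if "X \<in> carrier_mat n n" for X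
    using sim that by (metis assoc_mult_mat left_mult_one_mat)
  note assoc = assoc_mult_mat[of _ n n _ n _ n]
  have "H * H = P * (T * (Q * (P * (T * Q))))" using sim(3-7) by (simp add: assoc)
  also have "\<dots> = P * (T * T * Q)" using sim(5-7) by (simp add: QP)
  finally have "mtrace (H * H) = mtrace (T * T * Q * P)"
    using mtrace_mult_comm[of P n n "T * T * Q"] sim by simp
  also have "\<dots> = mtrace (T * T)" using sim by (simp add: assoc)
  also have "\<dots> = 0" using mtrace_square_upper_triangular_zero_diag[OF ut sim(5) diag0] .
  finally show ?thesis using hermitian_square_trace_zero[OF herm H] by blast
qed

lemma hermitian_eigenvalue_real:
  assumes "hermitian_mat A" "A \<in> carrier_mat n n" "eigenvector A v \<mu>"
  shows "\<mu> = of_real (Re \<mu>)"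
proof -
  have v: "v \<in> carrier_vec n" "v \<noteq> 0\<^sub>v n" and Av: "A *\<^sub>v v = \<mu> \<cdot>\<^sub>v v"
    using assms(2,3) unfolding eigenvector_def by auto
  have "\<mu> * (conjugate v \<bullet> v) = cnj \<mu> * (conjugate v \<bullet> v)"
    using hermitian_scalar_prod[OF assms(1,2) v(1) v(1)] v Av by (simp add: conjugate_smult_vec)
  then have "\<mu> = cnj \<mu>" using scalar_prod_conjugate_self(3)[OF v(1)] v(2) by simp
  then show ?thesis by (metis Reals_cnj_iff complex_is_Real_iff of_real_Re)
qed

lemma unit_multiple_exists:
  assumes "(v :: complex vec) \<in> carrier_vec n" "v \<noteq> 0\<^sub>v n"
  obtains c where "conjugate (c \<cdot>\<^sub>v v) \<bullet> (c \<cdot>\<^sub>v v) = 1"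
proof
  define s where "s = Re (conjugate v \<bullet> v)"
  note self = scalar_prod_conjugate_self[OF assms(1), folded s_def]
  have "s > 0" using self assms(2) by (auto simp: less_le)
  then show "conjugate (of_real (1 / sqrt s) \<cdot>\<^sub>v v) \<bullet> (of_real (1 / sqrt s) \<cdot>\<^sub>v v) = 1"
    using assms(1) self(1) by (simp add: conjugate_smult_vec power2_eq_square[symmetric] flip: of_real_power)
qed

lemma smult_vec_cancel:
  assumes "(c :: complex) \<noteq> 0" "v \<in> carrier_vec n" "w \<in> carrier_vec n" "c \<cdot>\<^sub>v v = c \<cdot>\<^sub>v w"
  shows "v = w"
proof (rule eq_vecI)
  fix i assume "i < dim_vec w"
  then have "c * v $ i = c * w $ i" using arg_cong[OF assms(4), of "\<lambda>u. u $ i"] assms(2,3) by simp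
  then show "v $ i = w $ i" using assms(1) by simp
qed (use assms in auto)

text \<open>Either \<open>Pr A = 0\<close>, and a nonzero column of \<open>Pr\<close> is an eigenvector for \<open>0\<close>, or
  \<open>Pr A\<close> is a nonzero Hermitian matrix, and its eigenvectors for nonzero eigenvalues lie in
  the range of \<open>Pr\<close>, where \<open>Pr A\<close> and \<open>A\<close> agree.\<close>

lemma hermitian_eigenvector_in_projection_range:
  assumes herm: "hermitian_mat A" and A: "A \<in> carrier_mat n n"
    and herm_proj: "hermitian_mat Pr" and Pr: "Pr \<in> carrier_mat n n"
    and idem: "Pr * Pr = Pr" and comm: "Pr * A = A * Pr" and nz: "Pr \<noteq> 0\<^sub>m n n"
  obtains x \<mu> where "eigenvector A x \<mu>" "Pr *\<^sub>v x = x"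
proof (cases "Pr * A = 0\<^sub>m n n")
  case True
  have "\<exists>i<n. \<exists>j<n. Pr $$ (i, j) \<noteq> 0"
  proof (rule ccontr)
    assume "\<not> ?thesis"
    then have "Pr = 0\<^sub>m n n" using Pr by (intro eq_matI) auto
    then show False using nz by simp
  qed
  then obtain i j where ij: "i < n" "j < n" "Pr $$ (i, j) \<noteq> 0" by blast
  define x where "x = col Pr j"
  have "x $ i \<noteq> 0" using ij Pr unfolding x_def by simp
  then have x: "x \<in> carrier_vec n" "x \<noteq> 0\<^sub>v n" using ij(1) Pr unfolding x_def by auto
  have Prx: "Pr *\<^sub>v x = x" using col_mult2[OF Pr Pr ij(2)] idem unfolding x_def by simp
  have "A *\<^sub>v x = A *\<^sub>v (Pr *\<^sub>v x)" using Prx by simp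
  also have "\<dots> = (Pr * A) *\<^sub>v x" using comm A Pr x by (simp flip: assoc_mult_mat_vec)
  also have "\<dots> = 0 \<cdot>\<^sub>v x" using True x by (intro eq_vecI) auto
  finally show ?thesis using that x A Prx unfolding eigenvector_def by auto
next
  case False
  define B where "B = Pr * A"
  have B: "B \<in> carrier_mat n n" unfolding B_def using Pr A by simp
  have "hermitian_mat B"
    using herm herm_proj comm mat_adjoint_mult[OF Pr A] unfolding B_def hermitian_mat_def by simp
  then obtain \<mu> x where "\<mu> \<noteq> 0" "eigenvector B x \<mu>"
    using hermitian_eigenvalues_zero_imp_zero[OF _ B] False unfolding B_def by blast
  then have \<mu>: "\<mu> \<noteq> 0" and x: "x \<in> carrier_vec n" "x \<noteq> 0\<^sub>v n" and Bx: "B *\<^sub>v x = \<mu> \<cdot>\<^sub>v x"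
    using B unfolding eigenvector_def by auto
  have PrB: "Pr * B = B" using Pr A idem unfolding B_def by (simp flip: assoc_mult_mat)
  have "\<mu> \<cdot>\<^sub>v (Pr *\<^sub>v x) = Pr *\<^sub>v (B *\<^sub>v x)" using Bx Pr x by (simp add: mult_mat_vec)
  also have "\<dots> = B *\<^sub>v x" using Pr B x PrB by (simp flip: assoc_mult_mat_vec)
  finally have Prx: "Pr *\<^sub>v x = x" using smult_vec_cancel[OF \<mu> _ x(1)] Pr x Bx by simp
  have "A *\<^sub>v x = A *\<^sub>v (Pr *\<^sub>v x)" using Prx by simp
  also have "\<dots> = B *\<^sub>v x" unfolding B_def using comm A Pr x by (simp flip: assoc_mult_mat_vec)
  finally show ?thesis using that x Bx Prx A unfolding eigenvector_def by auto
qed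

lemma hermitian_unit_eigenvector:
  assumes herm: "hermitian_mat A" and A: "A \<in> carrier_mat n n" and ev: "eigenvector A x \<mu>"
  obtains c where "A *\<^sub>v (c \<cdot>\<^sub>v x) = of_real (Re \<mu>) \<cdot>\<^sub>v (c \<cdot>\<^sub>v x)"
    "conjugate (c \<cdot>\<^sub>v x) \<bullet> (c \<cdot>\<^sub>v x) = 1"
proof -
  have x: "x \<in> carrier_vec n" "x \<noteq> 0\<^sub>v n" and Ax: "A *\<^sub>v x = \<mu> \<cdot>\<^sub>v x"
    using A ev unfolding eigenvector_def by auto
  obtain c where "conjugate (c \<cdot>\<^sub>v x) \<bullet> (c \<cdot>\<^sub>v x) = 1"
    using unit_multiple_exists[OF x] .
  moreover have "A *\<^sub>v (c \<cdot>\<^sub>v x) = of_real (Re \<mu>) \<cdot>\<^sub>v (c \<cdot>\<^sub>v x)"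
    using hermitian_eigenvalue_real[OF herm A ev] A x Ax
    by (auto simp: mult_mat_vec smult_smult_assoc mult.commute)
  ultimately show ?thesis using that by blast
qed

definition real_diag :: "nat \<Rightarrow> (nat \<Rightarrow> real) \<Rightarrow> complex mat" where
  "real_diag n f = mat n n (\<lambda>(i, j). if i = j then of_real (f i) else 0)"

lemma real_diag_carrier [simp]: "real_diag n f \<in> carrier_mat n n"
  and real_diag_dim [simp]: "dim_row (real_diag n f) = n" "dim_col (real_diag n f) = n"
  unfolding real_diag_def by auto

lemma mult_real_diag_index:
  assumes "X \<in> carrier_mat m n" "i < m" "j < n"
  shows "(X * real_diag n f) $$ (i, j) = X $$ (i, j) * of_real (f j)"
proof -
  have "(X * real_diag n f) $$ (i, j) = (\<Sum>l = 0..<n. X $$ (i, l) * (if l = j then of_real (f j) else 0))"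
    using assms by (auto simp: scalar_prod_def real_diag_def intro!: sum.cong)
  also have "\<dots> = (\<Sum>l = 0..<n. if l = j then X $$ (i, l) * of_real (f j) else 0)"
    by (intro sum.cong) auto
  finally show ?thesis using assms by simp
qed

lemma col_mult_real_diag:
  assumes "X \<in> carrier_mat m n" "i < n"
  shows "col (X * real_diag n f) i = of_real (f i) \<cdot>\<^sub>v col X i"
proof (rule eq_vecI)
  fix j assume "j < dim_vec (of_real (f i) \<cdot>\<^sub>v col X i)"
  then show "col (X * real_diag n f) i $ j = (of_real (f i) \<cdot>\<^sub>v col X i) $ j"
    using mult_real_diag_index[OF assms(1) _ assms(2), of j f] assms by (simp add: mult.commute)
qed (use assms in simp)

lemma real_diag_mult_vec:
  assumes "y \<in> carrier_vec n"
  shows "real_diag n f *\<^sub>v y = vec n (\<lambda>i. of_real (f i) * y $ i)"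
proof (rule eq_vecI)
  fix i assume i: "i < dim_vec (vec n (\<lambda>i. of_real (f i) * y $ i))"
  have "(real_diag n f *\<^sub>v y) $ i = (\<Sum>j = 0..<n. (if i = j then of_real (f i) else 0) * y $ j)"
    using assms i by (auto simp: scalar_prod_def real_diag_def intro!: sum.cong)
  also have "\<dots> = (\<Sum>j = 0..<n. if j = i then of_real (f i) * y $ i else 0)"
    by (intro sum.cong) auto
  finally
  show "(real_diag n f *\<^sub>v y) $ i = vec n (\<lambda>i. of_real (f i) * y $ i) $ i" using i by simp
qed (use assms in auto)

lemma mat_adjoint_real_diag [simp]: "mat_adjoint (real_diag n f) = real_diag n f"
  by (intro eq_matI) (auto simp: real_diag_def)

definition orthonormal_eigenvectors ::
  "nat \<Rightarrow> complex mat \<Rightarrow> complex vec list \<Rightarrow> (nat \<Rightarrow> real) \<Rightarrow> bool" where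
  "orthonormal_eigenvectors n A vs lam \<longleftrightarrow>
     (\<forall>i<length vs. vs ! i \<in> carrier_vec n \<and> A *\<^sub>v vs ! i = of_real (lam i) \<cdot>\<^sub>v vs ! i) \<and>
     (\<forall>i<length vs. \<forall>j<length vs. conjugate (vs ! i) \<bullet> vs ! j = (if i = j then 1 else 0))"

lemma orthonormal_eigenvectors_mat_of_cols:
  assumes ev: "orthonormal_eigenvectors n A vs lam" and A: "A \<in> carrier_mat n n"
  defines "V \<equiv> mat_of_cols n vs"
  shows "V \<in> carrier_mat n (length vs)" "mat_adjoint V * V = 1\<^sub>m (length vs)"
    "A * V = V * real_diag (length vs) lam"
    "\<And>x i. x \<in> carrier_vec n \<Longrightarrow> i < length vs \<Longrightarrow>
       (mat_adjoint V *\<^sub>v x) $ i = conjugate (vs ! i) \<bullet> x"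
proof -
  have vs: "vs ! i \<in> carrier_vec n" "A *\<^sub>v vs ! i = of_real (lam i) \<cdot>\<^sub>v vs ! i"
    and orth: "conjugate (vs ! i) \<bullet> vs ! j = (if i = j then 1 else 0)"
    if "i < length vs" "j < length vs" for i j
    using ev that unfolding orthonormal_eigenvectors_def by auto
  show V: "V \<in> carrier_mat n (length vs)" unfolding V_def by auto
  show adj: "(mat_adjoint V *\<^sub>v x) $ i = conjugate (vs ! i) \<bullet> x"
    if "x \<in> carrier_vec n" "i < length vs" for x i
    using that vs[of i i] V unfolding V_def
    by (auto simp: scalar_prod_def mat_of_cols_index intro!: sum.cong)
  show "mat_adjoint V * V = 1\<^sub>m (length vs)"
  proof (rule eq_matI)
    fix i j assume "i < dim_row (1\<^sub>m (length vs) :: complex mat)" "j < dim_col (1\<^sub>m (length vs) :: complex mat)"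
    then have ij: "i < length vs" "j < length vs" by auto
    have "(mat_adjoint V * V) $$ (i, j) = (mat_adjoint V *\<^sub>v col V j) $ i" using V ij by simp
    also have "\<dots> = conjugate (vs ! i) \<bullet> vs ! j"
      using adj[of "col V j" i] V ij vs[of j j] unfolding V_def by simp
    finally show "(mat_adjoint V * V) $$ (i, j) = 1\<^sub>m (length vs) $$ (i, j)" using orth ij by simp
  qed (use V in auto)
  show "A * V = V * real_diag (length vs) lam"
  proof (rule eq_matI)
    fix i j assume "i < dim_row (V * real_diag (length vs) lam)" "j < dim_col (V * real_diag (length vs) lam)"
    then have ij: "i < n" "j < length vs" using V by auto
    have "(A * V) $$ (i, j) = (A *\<^sub>v vs ! j) $ i" using ij A V vs(1)[of j j] unfolding V_def by auto
    then show "(A * V) $$ (i, j) = (V * real_diag (length vs) lam) $$ (i, j)"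
      using mult_real_diag_index[OF V ij] ij vs[of j j] arg_cong[OF vs(2)[of j j], of "\<lambda>v. v $ i"]
      unfolding V_def by (simp add: mat_of_cols_index)
  qed (use A V in auto)
qed

lemma isometry_range_projection:
  assumes V: "V \<in> carrier_mat n k" and VV: "mat_adjoint V * V = 1\<^sub>m k"
  shows "hermitian_mat (V * mat_adjoint V)"
    "mat_adjoint V * (V * mat_adjoint V) = mat_adjoint V"
    "V * mat_adjoint V * (V * mat_adjoint V) = V * mat_adjoint V"
    "mtrace (V * mat_adjoint V) = of_nat k"
proof -
  have Vh: "mat_adjoint V \<in> carrier_mat k n" using V by simp
  show "hermitian_mat (V * mat_adjoint V)"
    unfolding hermitian_mat_def using mat_adjoint_mult[OF V Vh] by simp
  show VhW: "mat_adjoint V * (V * mat_adjoint V) = mat_adjoint V"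
    using Vh VV by (simp del: assoc_mult_mat add: assoc_mult_mat[OF Vh V Vh, symmetric] left_mult_one_mat)
  then show "V * mat_adjoint V * (V * mat_adjoint V) = V * mat_adjoint V"
    using assoc_mult_mat[OF V Vh, of "V * mat_adjoint V" n] V Vh by simp
  show "mtrace (V * mat_adjoint V) = of_nat k"
    using mtrace_mult_comm[OF V Vh] VV by (simp add: mtrace_def)
qed

lemma eigenbasis_projection_commute:
  assumes herm: "hermitian_mat A" and A: "A \<in> carrier_mat n n" and V: "V \<in> carrier_mat n k"
    and AV: "A * V = V * real_diag k lam"
  shows "V * mat_adjoint V * A = A * (V * mat_adjoint V)"
proof -
  have Vh: "mat_adjoint V \<in> carrier_mat k n" and D: "real_diag k lam \<in> carrier_mat k k"
    using V by simp_all
  have VhA: "mat_adjoint V * A = real_diag k lam * mat_adjoint V"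
    using mat_adjoint_mult[OF A V] mat_adjoint_mult[OF V D] AV herm
    unfolding hermitian_mat_def by simp
  have "V * mat_adjoint V * A = V * real_diag k lam * mat_adjoint V"
    using VhA assoc_mult_mat[OF V D Vh] assoc_mult_mat[OF V Vh A] by simp
  also have "\<dots> = A * (V * mat_adjoint V)"
    using AV assoc_mult_mat[OF A V Vh] by simp
  finally show ?thesis .
qed

lemma complementary_projection:
  assumes W: "(W :: complex mat) \<in> carrier_mat n n" and herm: "hermitian_mat W"
    and idem: "W * W = W" and ne: "W \<noteq> 1\<^sub>m n"
  shows "hermitian_mat (1\<^sub>m n - W)" "(1\<^sub>m n - W) * (1\<^sub>m n - W) = 1\<^sub>m n - W"
    "1\<^sub>m n - W \<noteq> 0\<^sub>m n n"
    "\<And>A. A \<in> carrier_mat n n \<Longrightarrow> W * A = A * W \<Longrightarrow> (1\<^sub>m n - W) * A = A * (1\<^sub>m n - W)"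
    "\<And>x. x \<in> carrier_vec n \<Longrightarrow> (1\<^sub>m n - W) *\<^sub>v x = x \<Longrightarrow> W *\<^sub>v x = 0\<^sub>v n"
proof -
  show "hermitian_mat (1\<^sub>m n - W)"
    using herm W unfolding hermitian_mat_def by (simp add: mat_adjoint_minus[of _ n n])
  have "(1\<^sub>m n - W) * (1\<^sub>m n - W) = 1\<^sub>m n * (1\<^sub>m n - W) - W * (1\<^sub>m n - W)"
    by (rule minus_mult_distrib_mat) (use W in auto)
  also have "W * (1\<^sub>m n - W) = W * 1\<^sub>m n - W * W"
    by (rule mult_minus_distrib_mat) (use W in auto)
  finally show "(1\<^sub>m n - W) * (1\<^sub>m n - W) = 1\<^sub>m n - W" using W idem by (intro eq_matI) auto
  show "1\<^sub>m n - W \<noteq> 0\<^sub>m n n"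
  proof
    assume zero: "1\<^sub>m n - W = 0\<^sub>m n n"
    have "W = 1\<^sub>m n"
    proof (rule eq_matI)
      fix i j assume "i < dim_row (1\<^sub>m n :: complex mat)" "j < dim_col (1\<^sub>m n :: complex mat)"
      then show "W $$ (i, j) = 1\<^sub>m n $$ (i, j)"
        using arg_cong[OF zero, of "\<lambda>M. M $$ (i, j)"] W by (auto split: if_splits)
    qed (use W in auto)
    with ne show False by simp
  qed
  show "(1\<^sub>m n - W) * A = A * (1\<^sub>m n - W)" if "A \<in> carrier_mat n n" "W * A = A * W" for A
    using W that by (simp add: minus_mult_distrib_mat[of _ n n] mult_minus_distrib_mat[of A n n _ n])
  show "W *\<^sub>v x = 0\<^sub>v n" if x: "x \<in> carrier_vec n" and fixed: "(1\<^sub>m n - W) *\<^sub>v x = x" for x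
  proof (rule eq_vecI)
    fix i assume "i < dim_vec (0\<^sub>v n :: complex vec)"
    then show "(W *\<^sub>v x) $ i = 0\<^sub>v n $ i"
      using arg_cong[OF fixed, of "\<lambda>v. v $ i"] minus_mult_distrib_mat_vec[OF one_carrier_mat W x] W x
      by simp
  qed (use W in simp)
qed

lemma orthonormal_eigenvectors_snoc:
  assumes ev: "orthonormal_eigenvectors n A vs lam" and x: "x \<in> carrier_vec n"
    and Ax: "A *\<^sub>v x = of_real l \<cdot>\<^sub>v x" and unit: "conjugate x \<bullet> x = 1"
    and orth: "\<And>i. i < length vs \<Longrightarrow> conjugate (vs ! i) \<bullet> x = 0"
  shows "orthonormal_eigenvectors n A (vs @ [x]) (lam(length vs := l))"
proof -
  have orth': "conjugate x \<bullet> vs ! i = 0" if "i < length vs" for i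
  proof -
    have "vs ! i \<in> carrier_vec n" using ev that unfolding orthonormal_eigenvectors_def by simp
    then show ?thesis using conjugate_conjugate_sprod[OF _ x] conjugate_vec_sprod_comm[OF _ x]
        orth[OF that] by (metis conjugate_zero)
  qed
  show ?thesis unfolding orthonormal_eigenvectors_def
  proof (rule conjI; intro allI impI)
    fix i assume "i < length (vs @ [x])"
    then consider "i < length vs" | "i = length vs" by fastforce
    then show "(vs @ [x]) ! i \<in> carrier_vec n \<and>
        A *\<^sub>v (vs @ [x]) ! i = of_real ((lam(length vs := l)) i) \<cdot>\<^sub>v (vs @ [x]) ! i"
      using ev x Ax unfolding orthonormal_eigenvectors_def by cases (auto simp: nth_append)
  next
    fix i j assume "i < length (vs @ [x])" "j < length (vs @ [x])"
    then consider "i < length vs" "j < length vs" | "i < length vs" "j = length vs"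
      | "i = length vs" "j < length vs" | "i = length vs" "j = length vs"
      by fastforce
    then show "conjugate ((vs @ [x]) ! i) \<bullet> (vs @ [x]) ! j = (if i = j then 1 else 0)"
      using ev orth orth' unit unfolding orthonormal_eigenvectors_def by cases (auto simp: nth_append)
  qed
qed

lemma orthonormal_eigenvectors_extend:
  assumes herm: "hermitian_mat A" and A: "A \<in> carrier_mat n n"
    and ev: "orthonormal_eigenvectors n A vs lam" and less: "length vs < n"
  obtains w l where "orthonormal_eigenvectors n A (vs @ [w]) (lam(length vs := l))"
proof -
  define V where "V = mat_of_cols n vs"
  define W where "W = V * mat_adjoint V"
  note V = orthonormal_eigenvectors_mat_of_cols[OF ev A, folded V_def]
  note W = isometry_range_projection[OF V(1,2), folded W_def]
  have Vh: "mat_adjoint V \<in> carrier_mat (length vs) n" and Wc: "W \<in> carrier_mat n n"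
    unfolding W_def using V(1) by simp_all
  have "W \<noteq> 1\<^sub>m n" using W(4) less by (auto simp: mtrace_def)
  note Pr = complementary_projection[OF Wc W(1,3) this]
  have Pr_comm: "(1\<^sub>m n - W) * A = A * (1\<^sub>m n - W)"
    using Pr(4)[OF A eigenbasis_projection_commute[OF herm A V(1,3), folded W_def]] .
  obtain x \<mu> where ev_x: "eigenvector A x \<mu>" and fixed: "(1\<^sub>m n - W) *\<^sub>v x = x"
    using hermitian_eigenvector_in_projection_range[OF herm A Pr(1) minus_carrier_mat[OF Wc]
        Pr(2) Pr_comm Pr(3)] .
  have x: "x \<in> carrier_vec n" using ev_x A unfolding eigenvector_def by auto
  obtain c where Ax: "A *\<^sub>v (c \<cdot>\<^sub>v x) = of_real (Re \<mu>) \<cdot>\<^sub>v (c \<cdot>\<^sub>v x)"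
    and unit: "conjugate (c \<cdot>\<^sub>v x) \<bullet> (c \<cdot>\<^sub>v x) = 1"
    using hermitian_unit_eigenvector[OF herm A ev_x] .
  have "mat_adjoint V *\<^sub>v (c \<cdot>\<^sub>v x) = c \<cdot>\<^sub>v ((mat_adjoint V * W) *\<^sub>v x)"
    using W(2) Vh x by (simp add: mult_mat_vec W_def)
  also have "\<dots> = 0\<^sub>v (length vs)" using Pr(5)[OF x fixed] Vh Wc x by (intro eq_vecI) auto
  finally have "conjugate (vs ! i) \<bullet> (c \<cdot>\<^sub>v x) = 0" if "i < length vs" for i
    using V(4)[of "c \<cdot>\<^sub>v x" i] x that by simp
  then show ?thesis
    using that orthonormal_eigenvectors_snoc[OF ev _ Ax unit] x by simp
qed

lemma orthonormal_eigenvectors_exist: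
  assumes "hermitian_mat A" "A \<in> carrier_mat n n"
  shows "k \<le> n \<Longrightarrow> \<exists>vs lam. length vs = k \<and> orthonormal_eigenvectors n A vs lam"
proof (induction k)
  case 0
  show ?case by (auto simp: orthonormal_eigenvectors_def)
next
  case (Suc k)
  then obtain vs lam where "length vs = k" "orthonormal_eigenvectors n A vs lam" by auto
  with orthonormal_eigenvectors_extend[OF assms this(2)] Suc.prems show ?case
    by (metis Suc_le_eq length_append_singleton)
qed

definition unitary_mat :: "nat \<Rightarrow> complex mat \<Rightarrow> bool" where
  "unitary_mat n U \<longleftrightarrow> U \<in> carrier_mat n n \<and> mat_adjoint U * U = 1\<^sub>m n \<and> U * mat_adjoint U = 1\<^sub>m n"

lemma unitary_matD:
  "unitary_mat n U \<Longrightarrow> U \<in> carrier_mat n n"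
  "unitary_mat n U \<Longrightarrow> mat_adjoint U * U = 1\<^sub>m n"
  "unitary_mat n U \<Longrightarrow> U * mat_adjoint U = 1\<^sub>m n"
  unfolding unitary_mat_def by auto

theorem hermitian_spectral_decomposition:
  assumes herm: "hermitian_mat A" and A: "A \<in> carrier_mat n n"
  obtains U lam where "unitary_mat n U" "A * U = U * real_diag n lam"
    "A = U * real_diag n lam * mat_adjoint U"
proof -
  obtain vs lam where vs: "length vs = n" "orthonormal_eigenvectors n A vs lam"
    using orthonormal_eigenvectors_exist[OF herm A le_refl] by auto
  define U where "U = mat_of_cols n vs"
  note U = orthonormal_eigenvectors_mat_of_cols[OF vs(2) A, folded U_def, unfolded vs(1)]
  have "U * mat_adjoint U = 1\<^sub>m n"
    using mat_mult_left_right_inverse[OF mat_adjoint_carrier[OF U(1)] U(1,2)] .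
  then have unitary: "unitary_mat n U" using U unfolding unitary_mat_def by simp
  have "A = A * (U * mat_adjoint U)" using A \<open>U * mat_adjoint U = 1\<^sub>m n\<close> by simp
  also have "\<dots> = U * real_diag n lam * mat_adjoint U"
    using U(1,3) A by (simp flip: assoc_mult_mat[OF A U(1) mat_adjoint_carrier[OF U(1)]])
  finally show ?thesis using that unitary U(3) by blast
qed

lemma real_diag_mult: "real_diag n f * real_diag n g = real_diag n (\<lambda>i. f i * g i)"
proof (rule eq_matI)
  fix i j assume "i < dim_row (real_diag n (\<lambda>i. f i * g i))" "j < dim_col (real_diag n (\<lambda>i. f i * g i))"
  then show "(real_diag n f * real_diag n g) $$ (i, j) = real_diag n (\<lambda>i. f i * g i) $$ (i, j)"
    using mult_real_diag_index[of "real_diag n f" n n i j g] by (simp add: real_diag_def)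
qed auto

lemma unitary_conj_real_diag_carrier [simp]:
  "unitary_mat n U \<Longrightarrow> U * real_diag n f * mat_adjoint U \<in> carrier_mat n n"
  using unitary_matD(1) by simp

lemma unitary_conj_real_diag_mult:
  assumes "unitary_mat n U"
  shows "(U * real_diag n f * mat_adjoint U) * (U * real_diag n g * mat_adjoint U) =
    U * real_diag n (\<lambda>i. f i * g i) * mat_adjoint U"
proof -
  note assoc = assoc_mult_mat[of _ n n _ n _ n]
  note U = unitary_matD[OF assms]
  have "mat_adjoint U * (U * X) = X" if "X \<in> carrier_mat n n" for X
    using U that by (simp flip: assoc)
  then show ?thesis using U by (simp add: assoc real_diag_mult[symmetric])
qed

lemma unitary_conj_real_diag_quadratic_form:
  assumes "unitary_mat n U" and v: "v \<in> carrier_vec n"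
  shows "conjugate v \<bullet> ((U * real_diag n f * mat_adjoint U) *\<^sub>v v) =
     of_real (\<Sum>i<n. f i * (cmod ((mat_adjoint U *\<^sub>v v) $ i))\<^sup>2)"
proof -
  have U: "U \<in> carrier_mat n n" using unitary_matD(1)[OF assms(1)] .
  define y where "y = mat_adjoint U *\<^sub>v v"
  have y: "y \<in> carrier_vec n" unfolding y_def by (rule mult_mat_vec_carrier[OF mat_adjoint_carrier[OF U] v])
  have "(U * real_diag n f * mat_adjoint U) *\<^sub>v v = U *\<^sub>v (real_diag n f *\<^sub>v y)"
    unfolding y_def using assoc_mult_mat_vec[OF _ mat_adjoint_carrier[OF U] v, of "U * real_diag n f" n]
      assoc_mult_mat_vec[OF U real_diag_carrier y[unfolded y_def]] U by simp
  then have "conjugate v \<bullet> ((U * real_diag n f * mat_adjoint U) *\<^sub>v v) =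
      conjugate y \<bullet> (real_diag n f *\<^sub>v y)"
    using scalar_prod_mat_adjoint[OF U v mult_mat_vec_carrier[OF real_diag_carrier y]]
    unfolding y_def by simp
  also have "\<dots> = (\<Sum>i<n. of_real (f i) * (y $ i * cnj (y $ i)))"
    using y by (simp add: real_diag_mult_vec scalar_prod_def lessThan_atLeast0 mult_ac)
  also have "\<dots> = of_real (\<Sum>i<n. f i * (cmod (y $ i))\<^sup>2)"
    by (simp flip: complex_norm_square)
  finally show ?thesis unfolding y_def .
qed

lemma unitary_conj_real_diag_hermitian:
  assumes "unitary_mat n U"
  shows "hermitian_mat (U * real_diag n f * mat_adjoint U)"
proof -
  have U: "U \<in> carrier_mat n n" using unitary_matD(1)[OF assms] .
  have "mat_adjoint (U * real_diag n f * mat_adjoint U) = U * (real_diag n f * mat_adjoint U)"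
    using mat_adjoint_mult[of "U * real_diag n f" n n "mat_adjoint U" n] mat_adjoint_mult[OF U real_diag_carrier]
      U by simp
  then show ?thesis
    unfolding hermitian_mat_def using assoc_mult_mat[OF U real_diag_carrier mat_adjoint_carrier[OF U]] by simp
qed

lemma unitary_conj_real_diag_pos_def:
  assumes unitary: "unitary_mat n U" and pos: "\<And>i. i < n \<Longrightarrow> f i > 0"
  shows "pos_def_mat n (U * real_diag n f * mat_adjoint U)"
  unfolding pos_def_mat_def
proof (intro conjI ballI impI)
  fix v :: "complex vec" assume v: "v \<in> carrier_vec n" and nz: "v \<noteq> 0\<^sub>v n"
  have U: "U \<in> carrier_mat n n" "U * mat_adjoint U = 1\<^sub>m n" using unitary_matD[OF unitary] by auto
  define y where "y = mat_adjoint U *\<^sub>v v"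
  have y: "y \<in> carrier_vec n" unfolding y_def by (rule mult_mat_vec_carrier[OF mat_adjoint_carrier[OF U(1)] v])
  have "U *\<^sub>v y = v"
    unfolding y_def using assoc_mult_mat_vec[OF U(1) mat_adjoint_carrier[OF U(1)] v] U v by simp
  then have "y \<noteq> 0\<^sub>v n" using nz U by auto
  then obtain i where i: "i < n" "y $ i \<noteq> 0" using y by (metis eq_vecI carrier_vecD index_zero_vec)
  have "0 < f i * (cmod (y $ i))\<^sup>2" using pos[OF i(1)] i(2) by simp
  also have "\<dots> \<le> (\<Sum>i<n. f i * (cmod (y $ i))\<^sup>2)"
    by (rule member_le_sum) (use i(1) pos in \<open>auto simp: less_imp_le\<close>)
  finally show "0 < Re (conjugate v \<bullet> ((U * real_diag n f * mat_adjoint U) *\<^sub>v v))"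
    unfolding unitary_conj_real_diag_quadratic_form[OF unitary v] y_def by simp
qed (use unitary unitary_conj_real_diag_hermitian[OF unitary] in auto)

lemma pos_def_mat_carrier [simp]: "pos_def_mat n A \<Longrightarrow> A \<in> carrier_mat n n"
  unfolding pos_def_mat_def by simp

lemma pos_def_imp_pos_semidef:
  assumes "pos_def_mat n A"
  shows "pos_semidef_mat n A"
  unfolding pos_semidef_mat_def
proof (intro conjI ballI)
  fix v :: "complex vec" assume v: "v \<in> carrier_vec n"
  show "0 \<le> Re (conjugate v \<bullet> (A *\<^sub>v v))"
  proof (cases "v = 0\<^sub>v n")
    case True
    then show ?thesis using assms by (auto simp: pos_def_mat_def)
  next
    case False
    then show ?thesis using assms v unfolding pos_def_mat_def by (auto intro: less_imp_le)
  qed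
qed (use assms in \<open>auto simp: pos_def_mat_def\<close>)

lemma unitary_eigenvector_col:
  assumes "unitary_mat n U" and A: "A \<in> carrier_mat n n"
    and AU: "A * U = U * real_diag n lam" and i: "i < n"
  shows "col U i \<in> carrier_vec n" "A *\<^sub>v col U i = of_real (lam i) \<cdot>\<^sub>v col U i"
    "conjugate (col U i) \<bullet> col U i = 1"
proof -
  have U: "U \<in> carrier_mat n n" "mat_adjoint U * U = 1\<^sub>m n" using unitary_matD[OF assms(1)] by auto
  show "col U i \<in> carrier_vec n" using U by (simp add: carrier_vecI)
  have "A *\<^sub>v col U i = col (U * real_diag n lam) i" using AU A U i by (simp flip: col_mult2)
  also have "\<dots> = of_real (lam i) \<cdot>\<^sub>v col U i" using col_mult_real_diag[OF U(1) i] .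
  finally show "A *\<^sub>v col U i = of_real (lam i) \<cdot>\<^sub>v col U i" .
  have "conjugate (col U i) \<bullet> col U i = (mat_adjoint U * U) $$ (i, i)"
    using U(1) i by (auto simp: scalar_prod_def intro!: sum.cong)
  also have "\<dots> = 1" using U(2) i by simp
  finally show "conjugate (col U i) \<bullet> col U i = 1" .
qed

lemma pos_def_spectral_decomposition:
  assumes pd: "pos_def_mat n A"
  obtains U lam where "unitary_mat n U" "A * U = U * real_diag n lam"
    "A = U * real_diag n lam * mat_adjoint U" "\<And>i. i < n \<Longrightarrow> lam i > 0"
proof -
  have A: "A \<in> carrier_mat n n" and herm: "hermitian_mat A" using pd unfolding pos_def_mat_def by auto
  obtain U lam where U: "unitary_mat n U" "A * U = U * real_diag n lam"
    "A = U * real_diag n lam * mat_adjoint U"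
    using hermitian_spectral_decomposition[OF herm A] .
  have "lam i > 0" if i: "i < n" for i
  proof -
    note col = unitary_eigenvector_col[OF U(1) A U(2) i]
    have "col U i \<noteq> 0\<^sub>v n" using col(3) by auto
    then have "0 < Re (conjugate (col U i) \<bullet> (A *\<^sub>v col U i))"
      using pd col(1) unfolding pos_def_mat_def by blast
    then show ?thesis using col by simp
  qed
  with U that show ?thesis by blast
qed

lemma mat_inv_eqI:
  assumes A: "A \<in> carrier_mat n n" and B: "B \<in> carrier_mat n n" and AB: "A * B = 1\<^sub>m n"
  shows "mat_inv A = B"
  unfolding mat_inv_def
proof (rule the_equality)
  have "B * A = 1\<^sub>m n" using mat_mult_left_right_inverse[OF A B AB] .
  then show "B \<in> carrier_mat (dim_row A) (dim_row A) \<and> A * B = 1\<^sub>m (dim_row A) \<and> B * A = 1\<^sub>m (dim_row A)"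
    using A B AB by simp
next
  fix C assume "C \<in> carrier_mat (dim_row A) (dim_row A) \<and> A * C = 1\<^sub>m (dim_row A) \<and> C * A = 1\<^sub>m (dim_row A)"
  then have C: "C \<in> carrier_mat n n" "C * A = 1\<^sub>m n" using A by auto
  have "C = C * (A * B)" using AB C by simp
  also have "\<dots> = B" using C A B by (simp flip: assoc_mult_mat)
  finally show "C = B" .
qed

lemma pos_def_mat_inv:
  assumes pd: "pos_def_mat n A"
  shows "pos_def_mat n (mat_inv A)" "A * mat_inv A = 1\<^sub>m n" "mat_inv A * A = 1\<^sub>m n"
proof -
  obtain U lam where U: "unitary_mat n U" "A = U * real_diag n lam * mat_adjoint U"
    and pos: "\<And>i. i < n \<Longrightarrow> lam i > 0"
    using pos_def_spectral_decomposition[OF pd] by metis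
  define B where "B = U * real_diag n (\<lambda>i. 1 / lam i) * mat_adjoint U"
  have A: "A \<in> carrier_mat n n" using U by simp
  have B: "pos_def_mat n B" unfolding B_def using unitary_conj_real_diag_pos_def[OF U(1)] pos by simp
  have "A * B = U * real_diag n (\<lambda>i. lam i * (1 / lam i)) * mat_adjoint U"
    unfolding B_def U(2) by (rule unitary_conj_real_diag_mult[OF U(1)])
  also have "real_diag n (\<lambda>i. lam i * (1 / lam i)) = 1\<^sub>m n"
    using pos by (intro eq_matI) (auto simp: real_diag_def less_imp_neq[THEN not_sym])
  also have "U * 1\<^sub>m n * mat_adjoint U = 1\<^sub>m n" using unitary_matD[OF U(1)] by simp
  finally have AB: "A * B = 1\<^sub>m n" .
  note inv = mat_inv_eqI[OF A pos_def_mat_carrier[OF B] AB]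
  show "pos_def_mat n (mat_inv A)" "A * mat_inv A = 1\<^sub>m n" using inv B AB by simp_all
  show "mat_inv A * A = 1\<^sub>m n" using inv mat_mult_left_right_inverse[OF A _ AB] B by simp
qed

text \<open>\<open>w = T u - \<surd>l u\<close> satisfies \<open>T w = - \<surd>l w\<close>, which positivity of \<open>T\<close> only
  allows for \<open>w = 0\<close>.\<close>

lemma pos_semidef_sqrt_eigenvector:
  assumes T: "pos_semidef_mat n T" and TT: "T * T = A"
    and u: "u \<in> carrier_vec n" and Au: "A *\<^sub>v u = of_real l \<cdot>\<^sub>v u" and l: "l \<ge> 0"
  shows "T *\<^sub>v u = of_real (sqrt l) \<cdot>\<^sub>v u"
proof -
  have Tc: "T \<in> carrier_mat n n" and herm: "hermitian_mat T" using T unfolding pos_semidef_mat_def by auto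
  define s where "s = sqrt l"
  have s: "s \<ge> 0" "s * s = l" unfolding s_def using l by auto
  define Tu where "Tu = T *\<^sub>v u"
  have Tu: "Tu \<in> carrier_vec n" unfolding Tu_def using mult_mat_vec_carrier[OF Tc u] .
  define w where "w = Tu - of_real s \<cdot>\<^sub>v u"
  have w: "w \<in> carrier_vec n" unfolding w_def using Tu u by simp
  have TTu: "T *\<^sub>v Tu = of_real l \<cdot>\<^sub>v u" using TT Au Tc u unfolding Tu_def by (simp flip: assoc_mult_mat_vec)
  have "T *\<^sub>v w = of_real l \<cdot>\<^sub>v u - of_real s \<cdot>\<^sub>v Tu"
    unfolding w_def using mult_minus_distrib_mat_vec[OF Tc Tu, of "of_real s \<cdot>\<^sub>v u"] Tc u TTu
    by (simp add: mult_mat_vec Tu_def)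
  also have "\<dots> = (- of_real s) \<cdot>\<^sub>v w"
    unfolding w_def using Tu u s(2)[symmetric] by (intro eq_vecI) (auto simp: algebra_simps)
  finally have Tw: "T *\<^sub>v w = (- of_real s) \<cdot>\<^sub>v w" .
  have "conjugate w \<bullet> w = 0"
  proof (cases "s = 0")
    case True
    then have "w = Tu" unfolding w_def using Tu u by (intro eq_vecI) auto
    moreover have "conjugate Tu \<bullet> Tu = conjugate u \<bullet> (T *\<^sub>v Tu)"
      using hermitian_scalar_prod[OF herm Tc u Tu] unfolding Tu_def by simp
    ultimately show ?thesis using TTu True s(2) u by simp
  next
    case False
    have "0 \<le> Re (conjugate w \<bullet> (T *\<^sub>v w))" using T w unfolding pos_semidef_mat_def by blast
    then have "0 \<le> - s * Re (conjugate w \<bullet> w)" using Tw w by simp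
    then have "Re (conjugate w \<bullet> w) \<le> 0" using False s(1) by (simp add: mult_le_0_iff)
    then show ?thesis using scalar_prod_conjugate_self[OF w] by (metis antisym of_real_0)
  qed
  then have "w = 0\<^sub>v n" using scalar_prod_conjugate_self(3)[OF w] by simp
  show ?thesis unfolding Tu_def[symmetric] s_def[symmetric]
  proof (rule eq_vecI)
    fix i assume "i < dim_vec (of_real s \<cdot>\<^sub>v u)"
    then show "Tu $ i = (of_real s \<cdot>\<^sub>v u) $ i"
      using arg_cong[OF \<open>w = 0\<^sub>v n\<close>, of "\<lambda>v. v $ i"] u Tu unfolding w_def by simp
  qed (use u Tu in simp)
qed

lemma pos_semidef_sqrt_unique:
  assumes U: "unitary_mat n U" and A: "A \<in> carrier_mat n n"
    and AU: "A * U = U * real_diag n lam" and lam: "\<And>i. i < n \<Longrightarrow> lam i \<ge> 0"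
    and T: "pos_semidef_mat n T" and TT: "T * T = A"
  shows "T = U * real_diag n (\<lambda>i. sqrt (lam i)) * mat_adjoint U"
proof -
  note U = unitary_matD[OF U] U
  have Tc: "T \<in> carrier_mat n n" using T unfolding pos_semidef_mat_def by auto
  have TU: "T * U = U * real_diag n (\<lambda>i. sqrt (lam i))"
  proof (rule mat_col_eqI)
    fix i assume "i < dim_col (U * real_diag n (\<lambda>i. sqrt (lam i)))"
    then have i: "i < n" using U by simp
    note col = unitary_eigenvector_col[OF U(4) A AU i]
    have "col (T * U) i = T *\<^sub>v col U i" using col_mult2[OF Tc U(1) i] .
    also have "\<dots> = of_real (sqrt (lam i)) \<cdot>\<^sub>v col U i"
      using pos_semidef_sqrt_eigenvector[OF T TT col(1,2) lam[OF i]] .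
    also have "\<dots> = col (U * real_diag n (\<lambda>i. sqrt (lam i))) i"
      using col_mult_real_diag[OF U(1) i] by simp
    finally show "col (T * U) i = col (U * real_diag n (\<lambda>i. sqrt (lam i))) i" .
  qed (use Tc U in auto)
  have "T = T * U * mat_adjoint U" using U Tc assoc_mult_mat[OF Tc U(1) mat_adjoint_carrier[OF U(1)]] by simp
  then show ?thesis unfolding TU .
qed

lemma pos_def_mat_sqrt:
  assumes pd: "pos_def_mat n A"
  shows "pos_def_mat n (mat_sqrt A)" "mat_sqrt A * mat_sqrt A = A"
    "\<And>S. pos_semidef_mat n S \<Longrightarrow> S * S = A \<Longrightarrow> mat_sqrt A = S"
proof -
  obtain U lam where U: "unitary_mat n U" "A * U = U * real_diag n lam"
    "A = U * real_diag n lam * mat_adjoint U" and pos: "\<And>i. i < n \<Longrightarrow> lam i > 0"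
    using pos_def_spectral_decomposition[OF pd] by blast
  have A: "A \<in> carrier_mat n n" using pd unfolding pos_def_mat_def by simp
  define S0 where "S0 = U * real_diag n (\<lambda>i. sqrt (lam i)) * mat_adjoint U"
  have S0: "pos_def_mat n S0" unfolding S0_def using unitary_conj_real_diag_pos_def[OF U(1)] pos by simp
  have "S0 * S0 = U * real_diag n (\<lambda>i. sqrt (lam i) * sqrt (lam i)) * mat_adjoint U"
    unfolding S0_def by (rule unitary_conj_real_diag_mult[OF U(1)])
  also have "real_diag n (\<lambda>i. sqrt (lam i) * sqrt (lam i)) = real_diag n lam"
    using pos by (intro eq_matI) (auto simp: real_diag_def less_imp_le)
  finally have S0S0: "S0 * S0 = A" using U(3) by simp
  have unique: "S = S0" if "pos_semidef_mat n S" "S * S = A" for S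
    unfolding S0_def using pos_semidef_sqrt_unique[OF U(1) A U(2) _ that] pos by (simp add: less_imp_le)
  have "dim_row A = n" using A by simp
  then have sqrt: "mat_sqrt A = S0"
    unfolding mat_sqrt_def
    using pos_def_imp_pos_semidef[OF S0] S0S0 unique by (intro the_equality) blast+
  show "pos_def_mat n (mat_sqrt A)" "mat_sqrt A * mat_sqrt A = A" using sqrt S0 S0S0 by simp_all
  show "\<And>S. pos_semidef_mat n S \<Longrightarrow> S * S = A \<Longrightarrow> mat_sqrt A = S" using sqrt unique by metis
qed

lemma pos_def_mat_congruence:
  assumes C: "pos_def_mat n C" and A: "pos_def_mat n A"
  shows "pos_def_mat n (C * A * C)"
proof -
  have Cc: "C \<in> carrier_mat n n" and Ac: "A \<in> carrier_mat n n"
    and herm_C: "hermitian_mat C" and herm_A: "hermitian_mat A"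
    using C A unfolding pos_def_mat_def by auto
  have herm: "hermitian_mat (C * A * C)"
    using herm_C herm_A mat_adjoint_mult[of "C * A" n n C n] mat_adjoint_mult[OF Cc Ac] Cc Ac
    unfolding hermitian_mat_def by simp
  show ?thesis unfolding pos_def_mat_def
  proof (intro conjI herm ballI impI)
    fix v :: "complex vec" assume v: "v \<in> carrier_vec n" and nz: "v \<noteq> 0\<^sub>v n"
    define y where "y = C *\<^sub>v v"
    have y: "y \<in> carrier_vec n" unfolding y_def using mult_mat_vec_carrier[OF Cc v] .
    have Ci: "mat_inv C \<in> carrier_mat n n"
      using pos_def_mat_inv(1)[OF C] unfolding pos_def_mat_def by simp
    have "mat_inv C *\<^sub>v y = v"
      unfolding y_def using assoc_mult_mat_vec[OF Ci Cc v] pos_def_mat_inv(3)[OF C] v by simp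
    then have "y \<noteq> 0\<^sub>v n" using nz Ci by auto
    then have "0 < Re (conjugate y \<bullet> (A *\<^sub>v y))" using A y unfolding pos_def_mat_def by simp
    also have "conjugate y \<bullet> (A *\<^sub>v y) = conjugate v \<bullet> ((C * A * C) *\<^sub>v v)"
      using hermitian_scalar_prod[OF herm_C Cc v mult_mat_vec_carrier[OF Ac y]]
        assoc_mult_mat_vec[OF _ Cc v, of "C * A" n] assoc_mult_mat_vec[OF Cc Ac y] Cc Ac
      unfolding y_def by simp
    finally show "0 < Re (conjugate v \<bullet> ((C * A * C) *\<^sub>v v))" .
  qed (use Cc Ac in simp)
qed

lemma pos_def_mat_inv_cancel:
  assumes "pos_def_mat n A" "X \<in> carrier_mat n m"
  shows "A * (mat_inv A * X) = X" "mat_inv A * (A * X) = X"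
proof -
  have A: "A \<in> carrier_mat n n" and Ai: "mat_inv A \<in> carrier_mat n n"
    using assms(1) pos_def_mat_inv(1)[OF assms(1)] by simp_all
  show "A * (mat_inv A * X) = X" "mat_inv A * (A * X) = X"
    using assoc_mult_mat[OF A Ai assms(2)] assoc_mult_mat[OF Ai A assms(2)] pos_def_mat_inv[OF assms(1)]
      assms(2) by simp_all
qed

lemma mat_inv_mat_inv: "pos_def_mat n A \<Longrightarrow> mat_inv (mat_inv A) = A"
  using mat_inv_eqI pos_def_mat_inv pos_def_mat_carrier by metis

lemma mat_inv_square:
  assumes "pos_def_mat n S"
  shows "mat_inv (S * S) = mat_inv S * mat_inv S"
proof (rule mat_inv_eqI)
  note inv = pos_def_mat_inv[OF assms]
  show "S * S * (mat_inv S * mat_inv S) = 1\<^sub>m n"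
    using assms inv pos_def_mat_carrier[OF inv(1)] pos_def_mat_inv_cancel[OF assms, where m = n]
    by (simp add: assoc_mult_mat[of _ n n _ n _ n])
qed (use assms pos_def_mat_inv(1)[OF assms] in simp_all)

lemma geo_mean_riccati:
  assumes A: "pos_def_mat n A" and B: "pos_def_mat n B"
  shows "pos_def_mat n (geo_mean A B)" "geo_mean A B * mat_inv A * geo_mean A B = B"
    "\<And>X. pos_def_mat n X \<Longrightarrow> X * mat_inv A * X = B \<Longrightarrow> geo_mean A B = X"
proof -
  define a where "a = mat_sqrt A"
  define ai where "ai = mat_inv a"
  define m where "m = mat_sqrt (ai * B * ai)"
  note sqrt_A = pos_def_mat_sqrt[OF A, folded a_def]
  note inv_a = pos_def_mat_inv[OF sqrt_A(1), folded ai_def]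
  have C: "pos_def_mat n (ai * B * ai)" using pos_def_mat_congruence[OF inv_a(1) B] .
  note sqrt_C = pos_def_mat_sqrt[OF C, folded m_def]
  have G: "geo_mean A B = a * m * a" unfolding geo_mean_def Let_def a_def ai_def m_def ..
  note carrier = pos_def_mat_carrier[OF sqrt_A(1)] pos_def_mat_carrier[OF inv_a(1)]
    pos_def_mat_carrier[OF sqrt_C(1)] pos_def_mat_carrier[OF B]
  note cancel = pos_def_mat_inv_cancel[OF sqrt_A(1), where m = n, folded ai_def] inv_a(2,3)
  note [simp] = assoc_mult_mat[of _ n n _ n _ n] carrier cancel right_mult_one_mat[OF carrier(4)]
  have Ai: "mat_inv A = ai * ai" using mat_inv_square[OF sqrt_A(1)] sqrt_A(2) unfolding ai_def by simp
  have mm: "m * (m * Y) = ai * (B * (ai * Y))" if "Y \<in> carrier_mat n n" for Y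
  proof -
    have "m * (m * Y) = (m * m) * Y" using that by simp
    then show ?thesis using sqrt_C(2) that by simp
  qed
  show "pos_def_mat n (geo_mean A B)" unfolding G using pos_def_mat_congruence[OF sqrt_A(1) sqrt_C(1)] .
  show "geo_mean A B * mat_inv A * geo_mean A B = B" unfolding G Ai by (simp add: mm)
  fix X assume X: "pos_def_mat n X" and riccati: "X * mat_inv A * X = B"
  have XX: "X * (ai * (ai * (X * Y))) = B * Y" if "Y \<in> carrier_mat n n" for Y
  proof -
    have "X * (ai * (ai * (X * Y))) = (X * mat_inv A * X) * Y" unfolding Ai using X that by simp
    then show ?thesis using riccati by simp
  qed
  have Z: "pos_def_mat n (ai * X * ai)" using pos_def_mat_congruence[OF inv_a(1) X] .
  have "(ai * X * ai) * (ai * X * ai) = ai * B * ai" using X by (simp add: XX)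
  then have "m = ai * X * ai" by (rule sqrt_C(3)[OF pos_def_imp_pos_semidef[OF Z]])
  then show "geo_mean A B = X" unfolding G using X right_mult_one_mat[OF pos_def_mat_carrier[OF X]] by simp
qed

lemma matsumoto_fidelity_riccati:
  assumes P: "pos_def_mat n P" and Q: "pos_def_mat n Q" and R: "pos_def_mat n R"
    and riccati: "R * P * R = mat_inv Q"
  shows "matsumoto_fidelity P Q = mtrace (mat_inv R)"
proof -
  note inv_P = pos_def_mat_inv[OF P] and inv_R = pos_def_mat_inv[OF R]
  note [simp] = assoc_mult_mat[of _ n n _ n _ n] pos_def_mat_carrier[OF P] pos_def_mat_carrier[OF R]
    pos_def_mat_carrier[OF inv_P(1)] pos_def_mat_carrier[OF inv_R(1)]
    pos_def_mat_inv_cancel[OF P, where m = n] pos_def_mat_inv_cancel[OF R, where m = n] inv_R(2)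
  have "mat_inv (R * P * R) = mat_inv R * mat_inv P * mat_inv R"
    by (rule mat_inv_eqI[of _ n]) simp_all
  then have "mat_inv R * mat_inv P * mat_inv R = Q"
    using riccati mat_inv_mat_inv[OF Q] by simp
  then have "geo_mean P Q = mat_inv R" using geo_mean_riccati(3)[OF P Q inv_R(1)] by simp
  then show ?thesis unfolding matsumoto_fidelity_def by simp
qed

lemma mat_sqrt_mat_inv:
  assumes X: "pos_def_mat n X"
  shows "mat_sqrt (mat_inv X) = mat_inv (mat_sqrt X)"
proof -
  note sqrt_X = pos_def_mat_sqrt[OF X]
  have "mat_inv (mat_sqrt X) * mat_inv (mat_sqrt X) = mat_inv X"
    using mat_inv_square[OF sqrt_X(1)] sqrt_X(2) by simp
  then show ?thesis
    using pos_def_mat_sqrt(3)[OF pos_def_mat_inv(1)[OF X]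
        pos_def_imp_pos_semidef[OF pos_def_mat_inv(1)[OF sqrt_X(1)]]] by simp
qed

lemma riccati_congruence_inverse:
  assumes P: "pos_def_mat n P" and Q: "pos_def_mat n Q" and R: "pos_def_mat n R"
    and riccati: "R * P * R = mat_inv Q"
  shows "mat_inv (mat_sqrt R * P * mat_sqrt R) = mat_sqrt R * Q * mat_sqrt R"
proof (rule mat_inv_eqI[of _ n])
  define r where "r = mat_sqrt R"
  note sqrt_R = pos_def_mat_sqrt[OF R, folded r_def]
  note inv_R = pos_def_mat_inv[OF R] and inv_r = pos_def_mat_inv[OF sqrt_R(1)]
  note [simp] = assoc_mult_mat[of _ n n _ n _ n] pos_def_mat_carrier[OF P] pos_def_mat_carrier[OF Q]
    pos_def_mat_carrier[OF R] pos_def_mat_carrier[OF sqrt_R(1)] pos_def_mat_carrier[OF inv_R(1)]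
    pos_def_mat_carrier[OF inv_r(1)]
    pos_def_mat_inv_cancel[OF R, where m = n] pos_def_mat_inv_cancel[OF sqrt_R(1), where m = n]
    pos_def_mat_inv_cancel[OF Q, where m = n] inv_r(2,3)
  have rr: "r * (r * Z) = R * Z" if "Z \<in> carrier_mat n n" for Z
  proof -
    have "r * (r * Z) = (r * r) * Z" using that by simp
    then show ?thesis using sqrt_R(2) by simp
  qed
  have PRQ: "P * (R * (Q * Z)) = mat_inv R * Z" if "Z \<in> carrier_mat n n" for Z
  proof -
    have "R * (P * (R * (Q * Z))) = (R * P * R) * (Q * Z)" using that by simp
    also have "\<dots> = Z" unfolding riccati using that by simp
    finally have "R * (P * (R * (Q * Z))) = Z" .
    then show ?thesis using pos_def_mat_inv_cancel(2)[OF R, of "P * (R * (Q * Z))" n] that by simp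
  qed
  have "mat_inv R = mat_inv r * mat_inv r" using mat_inv_square[OF sqrt_R(1)] sqrt_R(2) by simp
  then show "r * P * r * (r * Q * r) = 1\<^sub>m n" by (simp add: rr PRQ)
qed (use P Q R pos_def_mat_sqrt(1)[OF R] in simp_all)

lemma gen_fidelity_riccati:
  assumes P: "pos_def_mat n P" and Q: "pos_def_mat n Q" and R: "pos_def_mat n R"
    and riccati: "R * P * R = mat_inv Q"
  shows "gen_fidelity R P Q = mtrace (mat_inv R)"
proof -
  define X where "X = mat_sqrt R * P * mat_sqrt R"
  define s where "s = mat_sqrt X"
  have X: "pos_def_mat n X"
    unfolding X_def using pos_def_mat_congruence[OF pos_def_mat_sqrt(1)[OF R] P] .
  note inv_s = pos_def_mat_inv[OF pos_def_mat_sqrt(1)[OF X], folded s_def]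
  have s: "s \<in> carrier_mat n n" and Ri: "mat_inv R \<in> carrier_mat n n" and si: "mat_inv s \<in> carrier_mat n n"
    unfolding s_def using pos_def_mat_sqrt(1)[OF X] pos_def_mat_inv(1)[OF R] inv_s(1)[unfolded s_def]
    by simp_all
  have "gen_fidelity R P Q = mtrace (s * mat_inv R * mat_inv s)"
    using riccati_congruence_inverse[OF assms] mat_sqrt_mat_inv[OF X]
    unfolding gen_fidelity_def Let_def s_def X_def by simp
  also have "\<dots> = mtrace (mat_inv R * mat_inv s * s)"
    using mtrace_mult_comm[OF s, of "mat_inv R * mat_inv s"] s Ri si by simp
  also have "\<dots> = mtrace (mat_inv R)"
    using inv_s(3) Ri si s by (simp add: right_mult_one_mat[OF Ri])
  finally show ?thesis .
qed

theorem mainTheorem8: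
  fixes d :: nat and P Q R :: "complex mat"
  assumes "pos_def_mat d P" and "pos_def_mat d Q"
    and "R = geo_mean (mat_inv P) (mat_inv Q)"
  shows "gen_fidelity R P Q = matsumoto_fidelity P Q"
proof -
  note geo = geo_mean_riccati[OF pos_def_mat_inv(1)[OF assms(1)] pos_def_mat_inv(1)[OF assms(2)],
      folded assms(3), unfolded mat_inv_mat_inv[OF assms(1)]]
  show ?thesis
    using gen_fidelity_riccati[OF assms(1,2) geo(1,2)] matsumoto_fidelity_riccati[OF assms(1,2) geo(1,2)]
    by simp
qed

end
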